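(* Let $\Lambda$ be the flat torus of side length $L$, let $R_0>0$ and $R>0$ with $R_0<R/10$ (and $R/10<L/2$), and let $y_1,\dots,y_n\in\Lambda$ satisfy $d(y_i,y_j)\ge R/5$ for $i\ne j$. Let $0\le\lambda<\pi/2$. Then, as operators on $L^2(\Lambda)$, $$-\Delta-\frac{\lambda^2}{R_0^2}\sum_{i=1}^n\theta(R_0-d(x,y_i))\ \ge\ -\frac{3R_0}{(R/10)^3-R_0^3}\left(\frac{\tan\lambda}{\lambda}-1\right)\sum_{i=1}^n\theta(R/10-d(x,y_i)).$$
   Context: $\Delta$ is the Laplacian on $\Lambda$ (periodic boundary conditions), $d$ the torus distance $d(x,y)=\min_{k\in\mathbb{Z}^3}|x-y-kL|$, and $\theta$ the Heaviside function with $\theta(t)=0$ for $t<0$ and $\theta(t)=1$ for $t\ge0$; the potential terms act as multiplication operators. For $\lambda=0$ the expression $\frac{\tan\lambda}{\lambda}-1$ is understood as its limit $0$. *)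

theory Defs
  imports "HOL-Analysis.Analysis"
begin

text \<open>Flat torus of side length L, realised as L-periodic functions on R^3;
  the fundamental domain is the cube [0,L]^3.\<close>

definition fund_cube :: "real \<Rightarrow> (real^3) set" where
  "fund_cube L = cbox 0 (\<chi> i. L)"

definition torus_dist :: "real \<Rightarrow> real^3 \<Rightarrow> real^3 \<Rightarrow> real" where
  "torus_dist L x y = Inf {norm (x - y - L *\<^sub>R k) | k :: real^3. \<forall>i. k $ i \<in> \<int>}"

definition heaviside :: "real \<Rightarrow> real" where
  "heaviside t = (if t \<ge> 0 then 1 else 0)"

definition tan_factor :: "real \<Rightarrow> real" where
  "tan_factor a = (if a = 0 then 0 else tan a / a - 1)"

definition periodic3 :: "real \<Rightarrow> (real^3 \<Rightarrow> 'a) \<Rightarrow> bool" where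
  "periodic3 L f \<longleftrightarrow> (\<forall>x k. f (x + L *\<^sub>R axis k 1) = f x)"

definition C1_fun :: "(real^3 \<Rightarrow> complex) \<Rightarrow> bool" where
  "C1_fun f \<longleftrightarrow> (\<exists>D. (\<forall>x. (f has_derivative D x) (at x)) \<and>
      (\<forall>k. continuous_on UNIV (\<lambda>x. D x (axis k 1))))"

definition grad_sq :: "(real^3 \<Rightarrow> complex) \<Rightarrow> real^3 \<Rightarrow> real" where
  "grad_sq f x = (\<Sum>k\<in>UNIV. (cmod (frechet_derivative f (at x) (axis k 1)))\<^sup>2)"

end

theory Submission
  imports Defs
begin

(* Ground-state substitution. For a bounded vector field F, expanding |grad f + F f|^2 >= 0 and
   integrating the cross term by parts over the torus gives
     integral |grad f|^2 >= integral (div F - |F|^2) |f|^2.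
   Take F = sum_i G(x - y_i), where G(z) = -grad u(|z|) / u(|z|) for the radial profile
   u = sin(k r) / r, k = lambda / R0, on r <= R0, continued as a C^1 function A + B/r + C r^2
   up to R1 = R/10 with u'(R1) = 0, and G = 0 beyond R1. Then div G - |G|^2 = -Delta u / u is
   k^2 in the small balls, -6C/u >= -3 R0 (tan lambda / lambda - 1) / (R1^3 - R0^3) on the
   shells, and 0 outside; the separation d(y_i, y_j) >= 2 R1 makes the supports disjoint. *)

section \<open>Torus geometry\<close>

definition lattice_round :: "real \<Rightarrow> real^3 \<Rightarrow> real^3" where
  "lattice_round L z = (\<chi> j. of_int (round (z $ j / L)))"

definition torus_reduce :: "real \<Rightarrow> real^3 \<Rightarrow> real^3" where
  "torus_reduce L z = z - L *\<^sub>R lattice_round L z"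

lemma lattice_round_Ints: "\<forall>i. lattice_round L z $ i \<in> \<int>"
  by (simp add: lattice_round_def)

lemma norm_torus_reduce_le:
  assumes L: "L > 0" and k: "\<forall>i. k $ i \<in> \<int>"
  shows "norm (torus_reduce L z) \<le> norm (z - L *\<^sub>R k)"
proof (rule norm_le_componentwise_cart)
  fix i
  obtain m where m: "k $ i = of_int m" using k by (meson Ints_cases)
  have "\<bar>z $ i / L - of_int (round (z $ i / L))\<bar> \<le> \<bar>z $ i / L - of_int m\<bar>"
    by (rule round_diff_minimal)
  then have "\<bar>L * (z $ i / L - of_int (round (z $ i / L)))\<bar> \<le> \<bar>L * (z $ i / L - of_int m)\<bar>"
    using L by (simp add: abs_mult)
  then show "norm (torus_reduce L z $ i) \<le> norm ((z - L *\<^sub>R k) $ i)"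
    using L by (simp add: torus_reduce_def lattice_round_def m right_diff_distrib)
qed

lemma torus_dist_eq_norm_reduce:
  assumes "L > 0"
  shows "torus_dist L x y = norm (torus_reduce L (x - y))"
  unfolding torus_dist_def
proof (rule cInf_eq_minimum)
  show "norm (torus_reduce L (x - y)) \<in> {norm (x - y - L *\<^sub>R k) |k. \<forall>i. k $ i \<in> \<int>}"
    using lattice_round_Ints[of L "x - y"] by (auto simp: torus_reduce_def)
qed (use norm_torus_reduce_le[OF assms] in auto)

lemma torus_dist_le_norm:
  assumes "L > 0" and "\<forall>i. k $ i \<in> \<int>"
  shows "torus_dist L x y \<le> norm (x - y - L *\<^sub>R k)"
  using norm_torus_reduce_le[OF assms, of "x - y"] torus_dist_eq_norm_reduce[OF assms(1)] by simp

lemma torus_dist_triangle: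
  assumes L: "L > 0"
  shows "torus_dist L y z \<le> torus_dist L x y + torus_dist L x z"
proof -
  let ?ky = "lattice_round L (x - y)" and ?kz = "lattice_round L (x - z)"
  have "torus_dist L y z \<le> norm (y - z - L *\<^sub>R (?kz - ?ky))"
    using lattice_round_Ints[of L "x - y"] lattice_round_Ints[of L "x - z"]
    by (intro torus_dist_le_norm[OF L]) auto
  also have "y - z - L *\<^sub>R (?kz - ?ky) = torus_reduce L (x - z) - torus_reduce L (x - y)"
    by (simp add: torus_reduce_def algebra_simps)
  also have "norm \<dots> \<le> torus_dist L x y + torus_dist L x z"
    using norm_triangle_ineq4[of "torus_reduce L (x - z)" "torus_reduce L (x - y)"]
    unfolding torus_dist_eq_norm_reduce[OF L] by linarith
  finally show ?thesis .
qed

lemma torus_dist_lipschitz: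
  assumes L: "L > 0"
  shows "torus_dist L x y \<le> torus_dist L x' y + dist x x'"
proof -
  let ?k = "lattice_round L (x' - y)"
  have "torus_dist L x y \<le> norm (x - y - L *\<^sub>R ?k)"
    by (rule torus_dist_le_norm[OF L lattice_round_Ints])
  also have "\<dots> \<le> norm (x' - y - L *\<^sub>R ?k) + dist x x'"
    using norm_triangle_ineq[of "x' - y - L *\<^sub>R ?k" "x - x'"] by (simp add: dist_norm algebra_simps)
  also have "norm (x' - y - L *\<^sub>R ?k) = torus_dist L x' y"
    by (simp add: torus_dist_eq_norm_reduce[OF L] torus_reduce_def)
  finally show ?thesis .
qed

lemma continuous_on_torus_dist:
  assumes L: "L > 0"
  shows "continuous_on UNIV (\<lambda>x. torus_dist L x y)"
proof (rule continuous_onI)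
  fix x and e :: real assume "e > 0"
  show "\<exists>d>0. \<forall>x'\<in>UNIV. dist x' x < d \<longrightarrow> dist (torus_dist L x' y) (torus_dist L x y) \<le> e"
  proof (intro exI[of _ e] conjI ballI impI)
    fix x' assume "dist x' x < e"
    then show "dist (torus_dist L x' y) (torus_dist L x y) \<le> e"
      using torus_dist_lipschitz[OF L, of x' y x] torus_dist_lipschitz[OF L, of x y x']
      by (simp add: dist_real_def dist_commute)
  qed (use \<open>e > 0\<close> in auto)
qed

lemma round_one_add: "round (1 + a) = round (a::real) + 1"
proof -
  have "1 + a + 1/2 = (a + 1/2) + 1" by simp
  then show ?thesis unfolding round_def using floor_add2[of 1 "a + 1/2"] by (simp add: add.commute)
qed

lemma torus_reduce_periodic:
  assumes L: "L > 0"
  shows "torus_reduce L (z + L *\<^sub>R axis k 1) = torus_reduce L z"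
proof -
  have "(z + L *\<^sub>R axis k 1) $ j / L = z $ j / L + (if j = k then 1 else 0)" for j
    using L by (simp add: axis_def add_divide_distrib)
  then show ?thesis using L
    by (auto simp: torus_reduce_def lattice_round_def vec_eq_iff axis_def round_one_add
        algebra_simps)
qed

lemma abs_torus_reduce_component_le:
  assumes L: "L > 0"
  shows "\<bar>torus_reduce L z $ j\<bar> \<le> L / 2"
proof -
  have "\<bar>of_int (round (z $ j / L)) - z $ j / L\<bar> \<le> 1/2" by (rule of_int_round_abs_le)
  then have "\<bar>L * (of_int (round (z $ j / L)) - z $ j / L)\<bar> \<le> L / 2" using L by (simp add: abs_mult)
  then show ?thesis
    using L by (simp add: torus_reduce_def lattice_round_def right_diff_distrib abs_minus_commute)
qed

text \<open>For \<open>\<Phi>\<close> supported in a ball of radius \<open>R1 < L/2\<close>, \<open>\<Phi> \<circ> torus_reduce L\<close> is the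
  periodisation of \<open>\<Phi>\<close>; near \<open>z0\<close> only one lattice translate contributes.\<close>

lemma torus_reduce_local:
  fixes \<Phi> :: "real^3 \<Rightarrow> 'a::zero"
  assumes L: "L > 0" and R1: "R1 < L / 2" and supp: "\<And>z. norm z \<ge> R1 \<Longrightarrow> \<Phi> z = 0"
    and near: "norm (z - z0) < L / 2 - R1"
  shows "\<Phi> (torus_reduce L z) = \<Phi> (z - L *\<^sub>R lattice_round L z0)"
proof (cases "norm (z - L *\<^sub>R lattice_round L z0) < R1")
  case True
  have "round (z $ j / L) = round (z0 $ j / L)" for j
  proof (rule round_unique')
    have "\<bar>(z - L *\<^sub>R lattice_round L z0) $ j\<bar> < R1"
      using True component_le_norm_cart le_less_trans by blast
    then have "\<bar>L * (z $ j / L - of_int (round (z0 $ j / L)))\<bar> < L * (1/2)"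
      using L R1 by (simp add: lattice_round_def right_diff_distrib)
    then show "\<bar>z $ j / L - of_int (round (z0 $ j / L))\<bar> < 1/2"
      using L by (simp add: abs_mult)
  qed
  then show ?thesis by (simp add: torus_reduce_def lattice_round_def)
next
  case False
  have "norm (torus_reduce L z) \<ge> R1"
  proof (rule ccontr)
    assume small: "\<not> R1 \<le> norm (torus_reduce L z)"
    then have "lattice_round L z \<noteq> lattice_round L z0"
      using False by (auto simp: torus_reduce_def)
    then obtain j where j: "round (z $ j / L) \<noteq> round (z0 $ j / L)"
      by (auto simp: lattice_round_def vec_eq_iff)
    then have gap: "\<bar>of_int (round (z $ j / L)) - of_int (round (z0 $ j / L))\<bar> \<ge> (1::real)"
      by (metis of_int_diff of_int_1_le_iff of_int_abs right_minus_eq zero_less_abs_iff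
          int_one_le_iff_zero_less)
    have e1: "\<bar>torus_reduce L z $ j\<bar> < R1"
      using small component_le_norm_cart[of "torus_reduce L z" j] by linarith
    have e2: "\<bar>torus_reduce L z0 $ j\<bar> \<le> L / 2" by (rule abs_torus_reduce_component_le[OF L])
    have e3: "\<bar>z $ j - z0 $ j\<bar> < L / 2 - R1"
      using near component_le_norm_cart[of "z - z0" j] by simp
    have triangle: "\<bar>a\<bar> < R1 \<Longrightarrow> \<bar>b\<bar> \<le> L / 2 \<Longrightarrow> \<bar>c - d\<bar> < L / 2 - R1 \<Longrightarrow> \<bar>(c - a) - (d - b)\<bar> < L"
      for a b c d :: real
      by (auto simp: abs_less_iff abs_le_iff)
    have "\<bar>L * (of_int (round (z $ j / L)) - of_int (round (z0 $ j / L)))\<bar> < L * 1"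
      using triangle[OF e1 e2 e3]
      by (simp add: torus_reduce_def lattice_round_def right_diff_distrib)
    then show False using gap L by (simp add: abs_mult)
  qed
  then show ?thesis using supp False by simp
qed

section \<open>Integrals of periodic functions over the fundamental cube\<close>

definition slab :: "real \<Rightarrow> 3 \<Rightarrow> real \<Rightarrow> real \<Rightarrow> (real^3) set" where
  "slab L k a b = cbox (\<chi> i. if i = k then a else 0) (\<chi> i. if i = k then b else L)"

lemma fund_cube_eq_slab: "fund_cube L = slab L k 0 L"
  by (auto simp: fund_cube_def slab_def mem_box_cart)

lemma integral_slab_translate:
  fixes H :: "real^3 \<Rightarrow> real"
  assumes "continuous_on UNIV H"
  shows "integral (slab L k a b) (\<lambda>x. H (x + c *\<^sub>R axis k 1))
    = integral (slab L k (a + c) (b + c)) H"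
proof -
  have "(H has_integral integral (slab L k (a + c) (b + c)) H) (slab L k (a + c) (b + c))"
    unfolding slab_def
    by (intro integrable_integral integrable_continuous continuous_on_subset[OF assms]) auto
  from has_integral_affinity[OF this[unfolded slab_def], of 1 "c *\<^sub>R axis k 1"]
  have "((\<lambda>x. H (x + c *\<^sub>R axis k 1)) has_integral integral (slab L k (a + c) (b + c)) H)
     ((\<lambda>x. x - c *\<^sub>R axis k 1) ` slab L k (a + c) (b + c))"
    by (simp add: slab_def)
  moreover have "(\<lambda>x. x - c *\<^sub>R axis k 1) ` slab L k (a + c) (b + c) = slab L k a b"
  proof (rule set_eqI, rule iffI)
    fix x assume "x \<in> (\<lambda>x. x - c *\<^sub>R axis k 1) ` slab L k (a + c) (b + c)"
    then show "x \<in> slab L k a b" by (clarsimp simp: slab_def mem_box_cart axis_def) (smt (verit))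
  next
    fix x assume "x \<in> slab L k a b"
    then have "x + c *\<^sub>R axis k 1 \<in> slab L k (a + c) (b + c)"
      by (auto simp: slab_def mem_box_cart axis_def split: if_splits)
    then show "x \<in> (\<lambda>x. x - c *\<^sub>R axis k 1) ` slab L k (a + c) (b + c)"
      by (rule rev_image_eqI) simp
  qed
  ultimately show ?thesis by (simp add: integral_unique)
qed

lemma integral_slab_split:
  fixes H :: "real^3 \<Rightarrow> real"
  assumes "continuous_on UNIV H" "a \<le> c" "c \<le> b"
  shows "integral (slab L k a b) H = integral (slab L k a c) H + integral (slab L k c b) H"
proof -
  have "H integrable_on slab L k a b" unfolding slab_def
    by (intro integrable_continuous continuous_on_subset[OF assms(1)]) auto
  from integral_split[OF this[unfolded slab_def], of "axis k 1" c]
  have "integral (slab L k a b) H = integral (slab L k a b \<inter> {x. x \<bullet> axis k 1 \<le> c}) H +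
      integral (slab L k a b \<inter> {x. x \<bullet> axis k 1 \<ge> c}) H" by (simp add: slab_def)
  moreover have "slab L k a b \<inter> {x. x \<bullet> axis k 1 \<le> c} = slab L k a c"
    using assms by (auto simp: slab_def mem_box_cart inner_axis split: if_splits) (smt (verit))+
  moreover have "slab L k a b \<inter> {x. x \<bullet> axis k 1 \<ge> c} = slab L k c b"
    using assms by (auto simp: slab_def mem_box_cart inner_axis split: if_splits) (smt (verit))+
  ultimately show ?thesis by simp
qed

lemma integral_fund_cube_translate:
  fixes H :: "real^3 \<Rightarrow> real"
  assumes cont: "continuous_on UNIV H" and per: "\<And>x. H (x + L *\<^sub>R axis k 1) = H x"
    and t: "0 \<le> t" "t \<le> L"
  shows "integral (fund_cube L) (\<lambda>x. H (x + t *\<^sub>R axis k 1)) = integral (fund_cube L) H"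
proof -
  let ?e = "axis k 1 :: real^3"
  have cont_t: "continuous_on UNIV (\<lambda>x. H (x + t *\<^sub>R ?e))"
    by (intro continuous_on_compose2[OF cont] continuous_intros) auto
  have per_t: "H (x + t *\<^sub>R ?e) = H (x + (t - L) *\<^sub>R ?e)" for x
    using per[of "x + (t - L) *\<^sub>R ?e"] by (simp add: algebra_simps)
  have "integral (fund_cube L) (\<lambda>x. H (x + t *\<^sub>R ?e)) =
     integral (slab L k 0 (L - t)) (\<lambda>x. H (x + t *\<^sub>R ?e)) +
     integral (slab L k (L - t) L) (\<lambda>x. H (x + (t - L) *\<^sub>R ?e))"
    unfolding fund_cube_eq_slab[of L k] per_t[symmetric] using t
    by (intro integral_slab_split cont_t) auto
  also have "\<dots> = integral (slab L k t L) H + integral (slab L k 0 t) H"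
    using integral_slab_translate[OF cont, of L k] by simp
  also have "\<dots> = integral (fund_cube L) H"
    unfolding fund_cube_eq_slab[of L k] using t integral_slab_split[OF cont, of 0 t L L k] by simp
  finally show ?thesis .
qed

lemma integral_difference_quotient_eq_0:
  fixes H :: "real^3 \<Rightarrow> real"
  assumes cont: "continuous_on UNIV H" and per: "\<And>x. H (x + L *\<^sub>R axis k 1) = H x"
    and t: "0 < t" "t \<le> L"
  shows "integral (fund_cube L) (\<lambda>x. (H (x + t *\<^sub>R axis k 1) - H x) / t) = 0"
proof -
  have "(\<lambda>x. H (x + t *\<^sub>R axis k 1)) integrable_on fund_cube L" unfolding fund_cube_def
    by (intro integrable_continuous continuous_on_subset[OF continuous_on_compose2[OF cont]]
        continuous_intros) auto
  moreover have "H integrable_on fund_cube L" unfolding fund_cube_def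
    by (intro integrable_continuous continuous_on_subset[OF cont]) auto
  ultimately have "integral (fund_cube L) (\<lambda>x. (H (x + t *\<^sub>R axis k 1) - H x) / t)
      = (integral (fund_cube L) (\<lambda>x. H (x + t *\<^sub>R axis k 1)) - integral (fund_cube L) H) / t"
    by (simp add: integral_diff divide_inverse)
  then show ?thesis using integral_fund_cube_translate[OF cont per, of t] t by simp
qed

text \<open>Dominated convergence for the difference quotients; the uniform Lipschitz bound along
  the lines supplies the dominating constant.\<close>

lemma periodic_derivative_integral_eq_0:
  fixes H H' :: "real^3 \<Rightarrow> real" and N :: "(real^3) set"
  assumes L: "L > 0" and cont: "continuous_on UNIV H" and per: "\<And>x. H (x + L *\<^sub>R axis k 1) = H x"
    and N: "negligible N"
    and deriv: "\<And>x. x \<in> fund_cube L - N \<Longrightarrow>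
      ((\<lambda>s. H (x + s *\<^sub>R axis k 1)) has_real_derivative H' x) (at 0)"
    and \<delta>: "\<delta> > 0"
    and lip: "\<And>x t. x \<in> fund_cube L \<Longrightarrow> 0 < t \<Longrightarrow> t < \<delta> \<Longrightarrow>
      \<bar>H (x + t *\<^sub>R axis k 1) - H x\<bar> \<le> C * t"
    and bound: "\<And>x. x \<in> fund_cube L \<Longrightarrow> \<bar>H' x\<bar> \<le> C"
  shows "H' integrable_on fund_cube L" and "integral (fund_cube L) H' = 0"
proof -
  let ?e = "axis k 1 :: real^3" and ?S = "fund_cube L"
  define t where "t n = min \<delta> L / (real n + 2)" for n :: nat
  have t_pos: "t n > 0" for n using \<delta> L by (simp add: t_def)
  have t_le: "t n < \<delta>" "t n \<le> L" for n
  proof -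
    have "min \<delta> L / (real n + 2) < min \<delta> L / 1" using \<delta> L by (intro divide_strict_left_mono) auto
    then show "t n < \<delta>" "t n \<le> L" by (auto simp: t_def)
  qed
  have t_at_0: "filterlim t (at 0) sequentially"
  proof -
    have "filterlim (\<lambda>n::nat. 2 + real n) at_top sequentially"
      by (rule filterlim_tendsto_add_at_top[OF tendsto_const filterlim_real_sequentially])
    then have "filterlim (\<lambda>n::nat. real n + 2) at_infinity sequentially"
      by (simp add: add.commute filterlim_at_top_imp_at_infinity)
    then have "t \<longlonglongrightarrow> 0" unfolding t_def by (rule tendsto_divide_0[OF tendsto_const])
    moreover have "\<forall>\<^sub>F n in sequentially. t n \<noteq> 0"
      using t_pos by (intro always_eventually allI) (metis less_irrefl)
    ultimately show ?thesis by (simp add: filterlim_at)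
  qed
  define Q where "Q n x = (if x \<in> N then H' x else (H (x + t n *\<^sub>R ?e) - H x) / t n)" for n x
  have Q_spike: "x \<in> ?S - N \<Longrightarrow> Q n x = (H (x + t n *\<^sub>R ?e) - H x) / t n" for n x
    by (simp add: Q_def)
  have Q_integrable: "Q n integrable_on ?S" for n
  proof (rule integrable_spike[OF _ N Q_spike])
    have "continuous_on UNIV (\<lambda>x. (H (x + t n *\<^sub>R ?e) - H x) / t n)"
      by (intro continuous_intros continuous_on_compose2[OF cont]) (use t_pos[of n] in auto)
    then show "(\<lambda>x. (H (x + t n *\<^sub>R ?e) - H x) / t n) integrable_on ?S"
      unfolding fund_cube_def by (rule integrable_continuous[OF continuous_on_subset]) auto
  qed
  have Q_integral: "integral ?S (Q n) = 0" for n
  proof -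
    have "integral ?S (Q n) = integral ?S (\<lambda>x. (H (x + t n *\<^sub>R ?e) - H x) / t n)"
      by (rule integral_spike[OF N Q_spike, symmetric])
    then show ?thesis using integral_difference_quotient_eq_0[OF cont per t_pos t_le(2)] by simp
  qed
  have Q_bound: "norm (Q n x) \<le> C" if "x \<in> ?S" for n x
    using bound[OF that] lip[OF that t_pos t_le(1)] t_pos[of n]
    by (simp add: Q_def abs_divide divide_le_eq)
  have Q_lim: "(\<lambda>n. Q n x) \<longlonglongrightarrow> H' x" if "x \<in> ?S" for x
  proof (cases "x \<in> N")
    case False
    have "((\<lambda>h. (H (x + h *\<^sub>R ?e) - H x) / h) \<longlongrightarrow> H' x) (at 0)"
      using deriv[of x] that False by (simp add: DERIV_def)
    from filterlim_compose[OF this t_at_0] show ?thesis using False by (simp add: Q_def)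
  qed (simp add: Q_def)
  note dc = dominated_convergence[where h="\<lambda>x. C", OF Q_integrable _ Q_bound Q_lim]
  have C_integrable: "(\<lambda>x. C) integrable_on ?S" unfolding fund_cube_def by (rule integrable_const)
  show "H' integrable_on ?S" by (rule dc(1)[OF C_integrable])
  from dc(2)[OF C_integrable] have "(\<lambda>n. 0) \<longlonglongrightarrow> integral ?S H'" by (simp add: Q_integral)
  then show "integral ?S H' = 0" by (simp add: LIMSEQ_const_iff)
qed

section \<open>The radial trial profile\<close>

lemma sin_minus_mult_cos_nonneg:
  fixes x :: real assumes "0 \<le> x" "x \<le> pi"
  shows "0 \<le> sin x - x * cos x"
proof -
  have "(\<lambda>x. sin x - x * cos x) 0 \<le> (\<lambda>x. sin x - x * cos x) x"
  proof (rule DERIV_nonneg_imp_nondecreasing[OF assms(1)])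
    fix t assume t: "0 \<le> t" "t \<le> x"
    show "\<exists>y. ((\<lambda>x. sin x - x * cos x) has_real_derivative y) (at t) \<and> 0 \<le> y"
      by (intro exI[of _ "t * sin t"] conjI)
         (auto intro!: derivative_eq_intros mult_nonneg_nonneg sin_ge_zero simp: t algebra_simps
           intro: order_trans[OF t(2) assms(2)])
  qed
  then show ?thesis by simp
qed

lemma sin_minus_mult_cos_pos:
  fixes x :: real assumes "0 < x" "x < pi"
  shows "0 < sin x - x * cos x"
proof -
  have "\<exists>y. ((\<lambda>x. sin x - x * cos x) has_real_derivative y) (at t) \<and> 0 < y"
    if "x / 2 \<le> t" "t \<le> x" for t
  proof -
    have "0 < t * sin t" using that assms by (simp add: sin_gt_zero)
    then show ?thesis
      by (intro exI[of _ "t * sin t"] conjI) (auto intro!: derivative_eq_intros simp: algebra_simps)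
  qed
  then have "sin (x / 2) - x / 2 * cos (x / 2) < sin x - x * cos x"
    using DERIV_pos_imp_increasing[of "x / 2" x "\<lambda>x. sin x - x * cos x"] assms by simp
  moreover have "0 \<le> sin (x / 2) - x / 2 * cos (x / 2)"
    using assms by (intro sin_minus_mult_cos_nonneg) auto
  ultimately show ?thesis by simp
qed

lemma sin_minus_mult_cos_le:
  fixes x :: real assumes "0 \<le> x"
  shows "sin x - x * cos x \<le> x ^ 3 / 3"
proof -
  have "(\<lambda>x. x ^ 3 / 3 - (sin x - x * cos x)) 0 \<le> (\<lambda>x. x ^ 3 / 3 - (sin x - x * cos x)) x"
  proof (rule DERIV_nonneg_imp_nondecreasing[OF assms(1)])
    fix t assume t: "0 \<le> t" "t \<le> x"
    have "t * sin t \<le> t * t" using sin_x_le_x[of t] t by (simp add: mult_left_mono)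
    then show "\<exists>y. ((\<lambda>x. x ^ 3 / 3 - (sin x - x * cos x)) has_real_derivative y) (at t) \<and> 0 \<le> y"
      by (intro exI[of _ "t^2 - t * sin t"] conjI)
         (auto intro!: derivative_eq_intros simp: algebra_simps power2_eq_square)
  qed
  then show ?thesis by simp
qed

lemma norm_add_scaleR_axis_sq:
  fixes w :: "real^3"
  shows "(norm (w + s *\<^sub>R axis k 1))^2 = (norm w)^2 + 2 * s * w $ k + s^2"
  by (simp add: power2_norm_eq_inner inner_add_left inner_add_right inner_axis inner_commute
      algebra_simps) (simp add: power2_eq_square)

lemma norm_add_scaleR_axis:
  fixes w :: "real^3"
  shows "norm (w + s *\<^sub>R axis k 1) = sqrt ((norm w)^2 + 2 * s * w $ k + s^2)"
  by (metis norm_add_scaleR_axis_sq norm_ge_zero real_sqrt_unique)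

lemma sum_power2_components: "(\<Sum>k\<in>UNIV. (w $ k)^2) = (norm (w :: real^3))^2"
  by (simp add: norm_vec_def L2_set_def sum_nonneg)

text \<open>For a radial function \<open>u\<close>, the field \<open>-\<nabla>u/u\<close> is \<open>q(|z|) z\<close> with \<open>q = -u'/(r u)\<close>, and
  its divergence minus its squared length, \<open>3 q + q' r - q\<^sup>2 r\<^sup>2\<close>, equals \<open>-\<Delta>u/u\<close>.\<close>

definition radial_ratio_deriv ::
    "(real \<Rightarrow> real) \<Rightarrow> (real \<Rightarrow> real) \<Rightarrow> (real \<Rightarrow> real) \<Rightarrow> real \<Rightarrow> real" where
  "radial_ratio_deriv u du ddu r = - ddu r / (r * u r) + du r * (u r + r * du r) / (r^2 * (u r)^2)"

lemma has_real_derivative_radial_ratio: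
  assumes "(u has_real_derivative du r) (at r)" "(du has_real_derivative ddu r) (at r)"
    and "u r \<noteq> 0" "r \<noteq> 0"
  shows "((\<lambda>r. - du r / (r * u r)) has_real_derivative radial_ratio_deriv u du ddu r) (at r)"
  using assms
  by (auto intro!: derivative_eq_intros simp: radial_ratio_deriv_def field_simps power2_eq_square)

lemma radial_ratio_riccati:
  assumes "u r \<noteq> 0" "r \<noteq> 0"
  shows "3 * (- du r / (r * u r)) + radial_ratio_deriv u du ddu r * r - (- du r / (r * u r))^2 * r^2
     = - (ddu r + 2 * du r / r) / u r"
  using assms by (simp add: radial_ratio_deriv_def field_simps power2_eq_square)

locale radial_profile =
  fixes R0 R1 lam :: real
  assumes R0_pos: "0 < R0" and R0_less_R1: "R0 < R1"
    and lam_pos: "0 < lam" and lam_less: "lam < pi / 2"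
begin

definition "wavenum = lam / R0"
definition "u_in r = sin (wavenum * r) / r"
definition "du_in r = (wavenum * r * cos (wavenum * r) - sin (wavenum * r)) / r^2"
definition "ddu_in r =
  - (wavenum^2) * sin (wavenum * r) / r
  - 2 * (wavenum * r * cos (wavenum * r) - sin (wavenum * r)) / r^3"

text \<open>The coefficients make \<open>u_out\<close> agree with \<open>u_in\<close> to first order at \<open>R0\<close> and give
  \<open>u_out' R1 = 0\<close>, so that \<open>-\<nabla>u/u\<close> extends continuously by \<open>0\<close> beyond \<open>R1\<close>.\<close>

definition "cube_gap = R1^3 - R0^3"
definition "C_out = (sin lam - lam * cos lam) / (2 * cube_gap)"
definition "B_out = 2 * C_out * R1^3"
definition "A_out = sin lam / R0 - B_out / R0 - C_out * R0^2"
definition "u_out r = A_out + B_out / r + C_out * r^2"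
definition "du_out r = - B_out / r^2 + 2 * C_out * r"
definition "ddu_out r = 2 * B_out / r^3 + 2 * C_out"

definition "shell_const = 3 * R0 * (tan lam / lam - 1) / cube_gap"

definition "q_in r = - du_in r / (r * u_in r)"
definition "q_out r = - du_out r / (r * u_out r)"
definition "q r = (if r \<le> R0 then q_in r else if r \<le> R1 then q_out r else 0)"
definition "dq r =
  (if r < R0 then radial_ratio_deriv u_in du_in ddu_in r
   else if r < R1 then radial_ratio_deriv u_out du_out ddu_out r else 0)"

lemma cube_gap_pos: "cube_gap > 0"
  using R0_pos R0_less_R1 by (simp add: cube_gap_def power_strict_mono)

lemma u_in_deriv: "r \<noteq> 0 \<Longrightarrow> (u_in has_real_derivative du_in r) (at r)"
  unfolding u_in_def[abs_def] du_in_def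
  by (auto intro!: derivative_eq_intros simp: field_simps power2_eq_square)

lemma du_in_deriv: "r \<noteq> 0 \<Longrightarrow> (du_in has_real_derivative ddu_in r) (at r)"
  unfolding du_in_def[abs_def] ddu_in_def
  by (auto intro!: derivative_eq_intros simp: field_simps power2_eq_square power3_eq_cube)

lemma u_out_deriv: "r \<noteq> 0 \<Longrightarrow> (u_out has_real_derivative du_out r) (at r)"
  unfolding u_out_def[abs_def] du_out_def
  by (auto intro!: derivative_eq_intros simp: field_simps power2_eq_square)

lemma du_out_deriv: "r \<noteq> 0 \<Longrightarrow> (du_out has_real_derivative ddu_out r) (at r)"
  unfolding du_out_def[abs_def] ddu_out_def
  by (auto intro!: derivative_eq_intros simp: field_simps power2_eq_square power3_eq_cube)

lemma radial_laplacian_u_in: "r \<noteq> 0 \<Longrightarrow> ddu_in r + 2 * du_in r / r = - (wavenum^2) * u_in r"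
  by (simp add: ddu_in_def du_in_def u_in_def field_simps power2_eq_square power3_eq_cube)

lemma radial_laplacian_u_out: "r \<noteq> 0 \<Longrightarrow> ddu_out r + 2 * du_out r / r = 6 * C_out"
  by (simp add: ddu_out_def du_out_def field_simps power2_eq_square power3_eq_cube)

lemma cos_lam_pos: "cos lam > 0"
  using lam_pos lam_less by (intro cos_gt_zero_pi) auto

lemma sin_minus_mult_cos_lam_pos: "sin lam - lam * cos lam > 0"
  using lam_pos lam_less by (intro sin_minus_mult_cos_pos) auto

lemma C_out_pos: "C_out > 0"
  using sin_minus_mult_cos_lam_pos cube_gap_pos by (simp add: C_out_def)

lemma tan_div_minus_one_eq: "tan lam / lam - 1 = (sin lam - lam * cos lam) / (lam * cos lam)"
  using lam_pos cos_lam_pos by (simp add: tan_def field_simps)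

lemma shell_const_pos: "shell_const > 0"
  using sin_minus_mult_cos_lam_pos lam_pos cos_lam_pos cube_gap_pos R0_pos
  by (simp add: shell_const_def tan_div_minus_one_eq)

lemma u_in_pos: assumes "0 < r" "r \<le> R0" shows "u_in r > 0"
proof -
  have "lam * r \<le> lam * R0" using assms lam_pos by (simp add: mult_left_mono)
  then have "wavenum * r \<le> lam" using assms R0_pos by (simp add: wavenum_def field_simps)
  moreover have "0 < wavenum * r" using assms R0_pos lam_pos by (simp add: wavenum_def)
  ultimately have "sin (wavenum * r) > 0" using lam_less by (intro sin_gt_zero) auto
  then show ?thesis using assms by (simp add: u_in_def)
qed

lemma lam_cos_le_R0_u_out_R1: "lam * cos lam \<le> R0 * u_out R1"
proof -
  have "R0 * u_out R1
      = sin lam - (sin lam - lam * cos lam) * ((2*R1^3 - 3*R0*R1^2 + R0^3) / (2 * cube_gap))"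
    using R0_pos R0_less_R1 cube_gap_pos
    by (simp add: u_out_def A_out_def B_out_def C_out_def field_simps power2_eq_square
        power3_eq_cube)
  moreover have "R0 * R0^2 \<le> R0 * R1^2"
    using R0_pos R0_less_R1 by (intro mult_left_mono power_mono) auto
  then have "(2*R1^3 - 3*R0*R1^2 + R0^3) / (2 * cube_gap) \<le> 1"
    using cube_gap_pos by (simp add: cube_gap_def power2_eq_square power3_eq_cube algebra_simps)
  ultimately show ?thesis
    using mult_left_mono[OF _ less_imp_le[OF sin_minus_mult_cos_lam_pos]] by fastforce
qed

lemma u_out_R1_pos: "u_out R1 > 0"
proof -
  have "0 < lam * cos lam" using lam_pos cos_lam_pos by simp
  then have "0 < R0 * u_out R1" using lam_cos_le_R0_u_out_R1 by linarith
  then show ?thesis using R0_pos by (simp add: zero_less_mult_iff)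
qed

lemma u_out_R1_le: assumes "R0 \<le> r" "r \<le> R1" shows "u_out R1 \<le> u_out r"
proof -
  have r: "r > 0" using assms R0_pos by simp
  have "u_out r - u_out R1 = C_out * (R1 - r) * (2 * R1^2 / r - R1 - r)"
    using r R0_less_R1 R0_pos
    by (simp add: u_out_def B_out_def field_simps power2_eq_square power3_eq_cube)
  moreover have "(R1 + r) * r \<le> (2 * R1) * R1" using assms R0_pos by (intro mult_mono) auto
  then have "2 * R1^2 / r - R1 - r \<ge> 0" using r by (simp add: field_simps power2_eq_square)
  moreover have "C_out * (R1 - r) \<ge> 0" using C_out_pos assms by simp
  ultimately show ?thesis by (metis diff_ge_0_iff_ge mult_nonneg_nonneg)
qed

lemma u_out_pos: "R0 \<le> r \<Longrightarrow> r \<le> R1 \<Longrightarrow> u_out r > 0"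
  using u_out_R1_le u_out_R1_pos by (meson less_le_trans)

text \<open>On the shell \<open>-\<Delta>u/u = -6 C_out/u_out\<close>, and \<open>u_out \<ge> u_out R1 \<ge> lam cos lam / R0\<close>
  turns this into the constant of the theorem.\<close>

lemma shell_const_bound: assumes "R0 \<le> r" "r \<le> R1" shows "- shell_const \<le> - 6 * C_out / u_out r"
proof -
  let ?d = "sin lam - lam * cos lam"
  have "6 * C_out = 3 * ?d / (lam * cos lam * cube_gap) * (lam * cos lam)"
    using cube_gap_pos lam_pos cos_lam_pos by (simp add: C_out_def field_simps)
  also have "\<dots> \<le> 3 * ?d / (lam * cos lam * cube_gap) * (R0 * u_out R1)"
    using lam_cos_le_R0_u_out_R1 sin_minus_mult_cos_lam_pos lam_pos cos_lam_pos cube_gap_pos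
    by (intro mult_left_mono) auto
  also have "\<dots> = shell_const * u_out R1" by (simp add: shell_const_def tan_div_minus_one_eq)
  also have "\<dots> \<le> shell_const * u_out r"
    using u_out_R1_le[OF assms] shell_const_pos by (simp add: mult_left_mono)
  finally show ?thesis using u_out_pos[OF assms] by (simp add: divide_le_eq)
qed

lemma u_out_R0: "u_out R0 = u_in R0"
  using R0_pos R0_less_R1 by (simp add: u_out_def u_in_def A_out_def wavenum_def)

lemma du_out_R0: "du_out R0 = du_in R0"
proof -
  have "du_out R0 = - 2 * C_out * cube_gap / R0^2"
    using R0_pos
    by (simp add: du_out_def B_out_def cube_gap_def field_simps power2_eq_square power3_eq_cube)
  also have "\<dots> = - (sin lam - lam * cos lam) / R0^2"
    using cube_gap_pos R0_pos by (simp add: C_out_def field_simps)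
  also have "\<dots> = du_in R0" using R0_pos by (simp add: du_in_def wavenum_def field_simps)
  finally show ?thesis .
qed

lemma q_out_R0: "q_out R0 = q_in R0"
  by (simp add: q_out_def q_in_def u_out_R0 du_out_R0)

lemma q_out_R1: "q_out R1 = 0"
  using R0_pos R0_less_R1
  by (simp add: q_out_def du_out_def B_out_def power2_eq_square power3_eq_cube)

lemma q_beyond: "R1 \<le> r \<Longrightarrow> q r = 0"
  using q_out_R1 R0_less_R1 by (auto simp: q_def)

lemma dq_beyond: "R1 \<le> r \<Longrightarrow> dq r = 0"
  using R0_less_R1 by (auto simp: dq_def)

lemma q_has_derivative:
  assumes r: "0 < r" "r \<noteq> R0" "r \<noteq> R1"
  shows "(q has_real_derivative dq r) (at r)"
proof -
  consider "r < R0" | "R0 < r" "r < R1" | "R1 < r" using r by linarith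
  then show ?thesis
  proof cases
    case 1
    have "(q_in has_real_derivative radial_ratio_deriv u_in du_in ddu_in r) (at r)"
      unfolding q_in_def[abs_def] using r 1 u_in_pos[of r]
      by (intro has_real_derivative_radial_ratio u_in_deriv du_in_deriv) auto
    then have "(q has_real_derivative radial_ratio_deriv u_in du_in ddu_in r) (at r)"
      by (rule has_field_derivative_transform_within_open[where S="{0<..<R0}"])
         (use r 1 in \<open>auto simp: q_def\<close>)
    then show ?thesis using 1 by (simp add: dq_def)
  next
    case 2
    have "(q_out has_real_derivative radial_ratio_deriv u_out du_out ddu_out r) (at r)"
      unfolding q_out_def[abs_def] using r 2 u_out_pos[of r]
      by (intro has_real_derivative_radial_ratio u_out_deriv du_out_deriv) auto
    then have "(q has_real_derivative radial_ratio_deriv u_out du_out ddu_out r) (at r)"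
      by (rule has_field_derivative_transform_within_open[where S="{R0<..<R1}"])
         (use r 2 in \<open>auto simp: q_def\<close>)
    then show ?thesis using 2 by (simp add: dq_def)
  next
    case 3
    have "((\<lambda>_. 0) has_real_derivative 0) (at r)" by simp
    then have "(q has_real_derivative 0) (at r)"
      by (rule has_field_derivative_transform_within_open[where S="{R1<..}"])
         (use 3 q_beyond in auto)
    then show ?thesis using 3 dq_beyond by simp
  qed
qed

lemma riccati_ball: assumes "0 < r" "r < R0"
  shows "3 * q r + dq r * r - (q r)^2 * r^2 = wavenum^2"
proof -
  have "3 * q r + dq r * r - (q r)^2 * r^2 = - (ddu_in r + 2 * du_in r / r) / u_in r"
    using assms u_in_pos[of r] radial_ratio_riccati[of u_in r du_in ddu_in]
    by (simp add: q_def dq_def q_in_def)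
  also have "\<dots> = wavenum^2" using assms u_in_pos[of r] radial_laplacian_u_in[of r] by simp
  finally show ?thesis .
qed

lemma riccati_shell: assumes "R0 \<le> r" "r < R1"
  shows "3 * q r + dq r * r - (q r)^2 * r^2 = - 6 * C_out / u_out r"
proof -
  have r: "0 < r" using assms R0_pos by simp
  have q: "q r = q_out r" using assms q_out_R0 by (auto simp: q_def)
  have "3 * q r + dq r * r - (q r)^2 * r^2 = - (ddu_out r + 2 * du_out r / r) / u_out r"
    using assms r u_out_pos[of r] radial_ratio_riccati[of u_out r du_out ddu_out]
    by (simp add: q dq_def q_out_def)
  also have "\<dots> = - 6 * C_out / u_out r" using r radial_laplacian_u_out[of r] by simp
  finally show ?thesis .
qed

lemma continuous_on_q: "continuous_on {0<..} q"
proof -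
  have "r * u_in r \<noteq> 0" if "r \<in> {0<..R0}" for r
    using that u_in_pos[of r] by simp
  then have q_in: "continuous_on {0<..R0} q_in"
    unfolding q_in_def[abs_def] du_in_def u_in_def by (intro continuous_intros) auto
  have "r * u_out r \<noteq> 0" if "r \<in> {R0..R1}" for r
    using that u_out_pos[of r] R0_pos by simp
  then have q_out: "continuous_on {R0..R1} q_out"
    unfolding q_out_def[abs_def] du_out_def u_out_def using R0_pos by (intro continuous_intros) auto
  have "q = (\<lambda>r. if id r \<le> R0 then q_in r else (if id r \<le> R1 then q_out r else 0))"
    by (auto simp: q_def[abs_def])
  moreover have
    "continuous_on {0<..} (\<lambda>r. if id r \<le> R0 then q_in r else (if id r \<le> R1 then q_out r else 0))"
  proof (rule continuous_on_cases_le)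
    show "continuous_on {x \<in> {0<..}. id x \<le> R0} q_in"
      using q_in by (rule continuous_on_subset) auto
    show "continuous_on {x \<in> {0<..}. R0 \<le> id x} (\<lambda>r. if id r \<le> R1 then q_out r else 0)"
    proof (rule continuous_on_cases_le)
      show "continuous_on {x \<in> {x \<in> {0<..}. R0 \<le> id x}. id x \<le> R1} q_out"
        using q_out by (rule continuous_on_subset) auto
    qed (use q_out_R1 in \<open>auto intro: continuous_intros\<close>)
  qed (use q_out_R0 R0_less_R1 in \<open>auto intro: continuous_intros\<close>)
  ultimately show ?thesis by simp
qed

lemma q_in_bounds: assumes "0 < r" "r \<le> R0" shows "0 \<le> q_in r" "q_in r \<le> wavenum^2 / (3 * cos lam)"
proof -
  define x where "x = wavenum * r"
  have x0: "0 < x" using assms lam_pos R0_pos by (simp add: x_def wavenum_def)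
  have "lam * r \<le> lam * R0" using assms lam_pos by (simp add: mult_left_mono)
  then have xl: "x \<le> lam" using assms R0_pos by (simp add: x_def wavenum_def field_simps)
  have "sin x \<noteq> 0" using u_in_pos[OF assms] by (auto simp: u_in_def x_def)
  then have qe: "q_in r = (sin x - x * cos x) / (r^2 * sin x)"
    using assms by (simp add: q_in_def du_in_def u_in_def x_def field_simps power2_eq_square)
  have n0: "0 \<le> sin x - x * cos x" using x0 xl lam_less by (intro sin_minus_mult_cos_nonneg) auto
  have n1: "sin x - x * cos x \<le> x^3 / 3" using x0 by (intro sin_minus_mult_cos_le) auto
  have "cos lam \<le> cos x" using x0 xl lam_less by (subst cos_mono_le_eq) auto
  then have sx: "x * cos lam \<le> sin x" using n0 x0 by (smt (verit) mult_left_mono)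
  have sx0: "0 < x * cos lam" using x0 cos_lam_pos by simp
  show "0 \<le> q_in r" using qe n0 sx sx0 by simp
  have "q_in r \<le> (x^3 / 3) / (r^2 * (x * cos lam))"
    unfolding qe using n0 n1 sx sx0 assms x0 by (intro frac_le) auto
  also have "\<dots> = wavenum^2 / (3 * cos lam)"
    using x0 assms cos_lam_pos by (simp add: x_def field_simps power2_eq_square power3_eq_cube)
  finally show "q_in r \<le> wavenum^2 / (3 * cos lam)" .
qed

lemma abs_q_out_le:
  assumes "R0 \<le> r" "r \<le> R1"
  shows "\<bar>q_out r\<bar> \<le> (B_out / R0^2 + 2 * C_out * R1) / (R0 * u_out R1)"
proof -
  have r: "0 < r" using assms R0_pos by simp
  have B_out: "B_out \<ge> 0" using C_out_pos R0_pos R0_less_R1 by (simp add: B_out_def)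
  have "\<bar>du_out r\<bar> \<le> B_out / r^2 + 2 * C_out * r"
    using B_out C_out_pos r by (simp add: du_out_def abs_le_iff)
  also have "\<dots> \<le> B_out / R0^2 + 2 * C_out * R1"
    using assms B_out C_out_pos R0_pos
    by (intro add_mono divide_left_mono mult_left_mono power_mono) auto
  finally have num: "\<bar>du_out r\<bar> \<le> B_out / R0^2 + 2 * C_out * R1" .
  have den: "R0 * u_out R1 \<le> r * u_out r"
    using assms u_out_R1_le[OF assms] u_out_R1_pos R0_pos by (intro mult_mono) auto
  have "\<bar>q_out r\<bar> = \<bar>du_out r\<bar> / (r * u_out r)"
    using r u_out_pos[OF assms] by (simp add: q_out_def abs_divide abs_mult)
  also have "\<dots> \<le> (B_out / R0^2 + 2 * C_out * R1) / (R0 * u_out R1)"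
    using num den u_out_R1_pos R0_pos by (intro frac_le) auto
  finally show ?thesis .
qed

definition "q_max =
  max (wavenum^2 / (3 * cos lam)) ((B_out / R0^2 + 2 * C_out * R1) / (R0 * u_out R1))"

lemma abs_q_le: "0 < r \<Longrightarrow> \<bar>q r\<bar> \<le> q_max"
  using q_in_bounds[of r] abs_q_out_le[of r] q_beyond[of r] cos_lam_pos
  by (cases "r \<le> R0"; cases "r \<le> R1") (auto simp: q_def q_max_def le_max_iff_disj)

lemma q_max_nonneg: "0 \<le> q_max"
  using abs_q_le[of 1] by simp

text \<open>The Riccati identities bound \<open>dq r * r\<close> through \<open>q\<close>.\<close>

definition "dq_max = wavenum^2 + 3 * q_max + q_max^2 * R1^2 + 6 * C_out / u_out R1"

lemma abs_dq_mult_le: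
  assumes r: "0 < r"
  shows "\<bar>dq r * r\<bar> \<le> dq_max"
proof -
  have "0 \<le> 6 * C_out / u_out R1" using C_out_pos u_out_R1_pos by simp
  then have dq_max_ge: "wavenum^2 + 3 * q_max + q_max^2 * R1^2 \<le> dq_max" by (simp add: dq_max_def)
  have squares: "0 \<le> wavenum^2" "0 \<le> (q r * r)^2" "0 \<le> (q_max * R1)^2" by simp_all
  have qr: "(q r * r)^2 \<le> (q_max * R1)^2" if "r < R1"
  proof -
    have "\<bar>q r * r\<bar> \<le> q_max * R1"
      using abs_q_le[OF r] that r q_max_nonneg by (simp add: abs_mult mult_mono)
    then show ?thesis by (metis abs_ge_zero power2_abs power_mono)
  qed
  consider "r < R0" | "R0 \<le> r" "r < R1" | "R1 \<le> r" by linarith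
  then show ?thesis
  proof cases
    case 1
    then have "dq r * r = wavenum^2 - 3 * q r + (q r * r)^2"
      using riccati_ball[OF r] by (simp add: power_mult_distrib)
    then show ?thesis
      using qr[OF less_trans[OF 1 R0_less_R1]] abs_q_le[OF r] dq_max_ge squares
      unfolding abs_le_iff power_mult_distrib by linarith
  next
    case 2
    then have "dq r * r = - 6 * C_out / u_out r - 3 * q r + (q r * r)^2"
      using riccati_shell[OF 2] by (simp add: power_mult_distrib)
    moreover have "0 \<le> 6 * C_out / u_out r" "6 * C_out / u_out r \<le> 6 * C_out / u_out R1"
      using C_out_pos u_out_pos[of r] u_out_R1_le[of r] u_out_R1_pos 2
      by (auto intro: divide_left_mono)
    ultimately show ?thesis
      using qr[OF 2(2)] abs_q_le[OF r] squares unfolding dq_max_def abs_le_iff power_mult_distrib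
      by linarith
  next
    case 3
    have "0 \<le> dq_max" using dq_max_ge squares q_max_nonneg unfolding power_mult_distrib by linarith
    then show ?thesis by (simp add: dq_beyond[OF 3])
  qed
qed

section \<open>The trial vector field\<close>

text \<open>\<open>G z = q(|z|) z = -\<nabla>u/u\<close>, and \<open>dG k z\<close> is its partial derivative \<open>\<partial>\<^sub>k G\<^sub>k\<close>.\<close>

definition "G z = q (norm z) *\<^sub>R z"
definition "dG k z = q (norm z) + dq (norm z) * (z $ k)^2 / norm z"

lemma G_beyond: "R1 \<le> norm z \<Longrightarrow> G z = 0"
  by (simp add: G_def q_beyond)

lemma dG_beyond: "R1 \<le> norm z \<Longrightarrow> dG k z = 0"
  by (simp add: dG_def q_beyond dq_beyond)

lemma norm_G_le_mult: "norm (G z) \<le> q_max * norm z"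
  using abs_q_le[of "norm z"] by (cases "z = 0") (simp_all add: G_def mult_right_mono)

lemma norm_G_le: "norm (G z) \<le> q_max * R1"
proof (cases "R1 \<le> norm z")
  case True
  then show ?thesis using G_beyond[OF True] q_max_nonneg R0_pos R0_less_R1 by simp
next
  case False
  then show ?thesis using norm_G_le_mult[of z] q_max_nonneg by (smt (verit) mult_left_mono)
qed

lemma abs_dG_le: "\<bar>dG k z\<bar> \<le> q_max + dq_max"
proof (cases "z = 0")
  case True
  then show ?thesis using q_max_nonneg abs_dq_mult_le[of 1] R0_pos
    by (simp add: dG_def q_def q_in_def)
next
  case False
  have "(z $ k)^2 \<le> (norm z)^2"
    using component_le_norm_cart[of z k] by (metis abs_ge_zero power_mono power2_abs)
  then have ratio: "(z $ k)^2 / (norm z)^2 \<le> 1" using False by (simp add: divide_le_eq_1)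
  have "\<bar>dq (norm z) * (z $ k)^2 / norm z\<bar> = \<bar>dq (norm z) * norm z\<bar> * ((z $ k)^2 / (norm z)^2)"
    using False by (simp add: abs_mult field_simps power2_eq_square)
  then have "\<bar>dq (norm z) * (z $ k)^2 / norm z\<bar> \<le> \<bar>dq (norm z) * norm z\<bar>"
    using mult_left_le[OF ratio abs_ge_zero] by simp
  then show ?thesis
    using abs_q_le[of "norm z"] abs_dq_mult_le[of "norm z"] False
    unfolding dG_def by (smt (verit) zero_less_norm_iff)
qed

lemma continuous_on_G: "continuous_on UNIV (G :: real^3 \<Rightarrow> real^3)"
proof -
  have "isCont G z" for z :: "real^3"
  proof (cases "z = 0")
    case True
    have "\<forall>\<^sub>F x in at (0::real^3). norm (G x) \<le> q_max * norm x"
      by (simp add: always_eventually norm_G_le_mult)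
    moreover have "((\<lambda>x. q_max * norm x) \<longlongrightarrow> 0) (at (0::real^3))"
      by (auto intro!: tendsto_eq_intros)
    ultimately have "((G :: real^3 \<Rightarrow> real^3) \<longlongrightarrow> 0) (at 0)" by (rule Lim_null_comparison)
    then show ?thesis using True by (simp add: isCont_def G_def)
  next
    case False
    have "isCont (\<lambda>z. q (norm z)) z"
      using continuous_on_q False
      by (intro continuous_at_compose[unfolded o_def, of z norm q] continuous_intros)
         (auto simp: continuous_on_eq_continuous_at)
    then show ?thesis unfolding G_def[abs_def] by (intro continuous_intros)
  qed
  then show ?thesis by (simp add: continuous_at_imp_continuous_on)
qed

lemma G_partial_deriv:
  fixes w :: "real^3"
  assumes w: "norm w \<noteq> 0" "norm w \<noteq> R0" "norm w \<noteq> R1"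
  shows "((\<lambda>s. G (w + s *\<^sub>R axis k 1) $ k) has_real_derivative dG k w) (at 0)"
proof -
  let ?p = "\<lambda>s. (norm w)^2 + 2 * s * w $ k + s^2"
  have G_line: "(\<lambda>s. G (w + s *\<^sub>R axis k 1) $ k) = (\<lambda>s. q (sqrt (?p s)) * (w $ k + s))"
    unfolding G_def norm_add_scaleR_axis by (simp add: axis_def)
  have p0: "?p 0 > 0" and sqrt_p0: "sqrt (?p 0) = norm w" using w by simp_all
  have dp: "(?p has_real_derivative 2 * w $ k) (at 0)"
    by (auto intro!: derivative_eq_intros)
  have dsqrt:
    "((\<lambda>s. sqrt (?p s)) has_real_derivative (inverse (sqrt (?p 0)) / 2 * (2 * w $ k))) (at 0)"
    by (rule DERIV_chain2[OF DERIV_real_sqrt dp]) (use p0 in simp)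
  have dq: "(q has_real_derivative dq (norm w)) (at (sqrt (?p 0)))"
    unfolding sqrt_p0 using w by (intro q_has_derivative) auto
  have "((\<lambda>s. q (sqrt (?p s))) has_real_derivative
      dq (norm w) * (inverse (sqrt (?p 0)) / 2 * (2 * w $ k))) (at 0)"
    by (rule DERIV_chain2[OF dq dsqrt])
  then have "((\<lambda>s. q (sqrt (?p s)) * (w $ k + s)) has_real_derivative
      dq (norm w) * (inverse (sqrt (?p 0)) / 2 * (2 * w $ k)) * (w $ k + 0) + q (sqrt (?p 0)) * 1)
      (at 0)"
    by (auto intro!: derivative_eq_intros)
  moreover have
    "dq (norm w) * (inverse (sqrt (?p 0)) / 2 * (2 * w $ k)) * (w $ k + 0) + q (sqrt (?p 0)) * 1 = dG k w"
    unfolding sqrt_p0 using w by (simp add: dG_def field_simps power2_eq_square)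
  ultimately show ?thesis unfolding G_line by simp
qed

lemma divergence_ineq:
  fixes w :: "real^3"
  assumes w: "norm w \<noteq> 0" "norm w \<noteq> R0" "norm w \<noteq> R1"
  shows "(\<Sum>k\<in>UNIV. dG k w) - (norm (G w))^2
    \<ge> wavenum^2 * heaviside (R0 - norm w) - shell_const * heaviside (R1 - norm w)"
proof -
  let ?r = "norm w"
  have r0: "?r > 0" using w by simp
  have "(\<Sum>k\<in>UNIV. dG k w) = 3 * q ?r + dq ?r * (\<Sum>k\<in>UNIV. (w $ k)^2) / ?r"
    by (simp add: dG_def sum.distrib sum_divide_distrib[symmetric] sum_distrib_left[symmetric])
  also have "\<dots> = 3 * q ?r + dq ?r * ?r" using r0 sum_power2_components[of w]
    by (simp add: power2_eq_square)
  finally have div: "(\<Sum>k\<in>UNIV. dG k w) = 3 * q ?r + dq ?r * ?r" .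
  have sq: "(norm (G w))^2 = (q ?r)^2 * ?r^2" by (simp add: G_def power_mult_distrib)
  consider "?r < R0" | "R0 < ?r" "?r < R1" | "R1 < ?r" using w R0_less_R1 by linarith
  then show ?thesis
  proof cases
    case 1
    then show ?thesis using riccati_ball[OF r0 1] div sq shell_const_pos R0_less_R1
      by (simp add: heaviside_def)
  next
    case 2
    then show ?thesis using riccati_shell[of ?r] shell_const_bound[of ?r] div sq
      by (simp add: heaviside_def)
  next
    case 3
    then show ?thesis using q_beyond[of ?r] dq_beyond[of ?r] div sq R0_less_R1
      by (simp add: heaviside_def)
  qed
qed

end

section \<open>Periodisation of the trial field\<close>

lemma finite_line_sphere_inter:
  fixes v :: "real^3"
  shows "finite {s::real. norm (v + s *\<^sub>R axis k 1) = \<rho>}"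
proof -
  define d where "d = \<rho>^2 - (norm v)^2 + (v $ k)^2"
  have "{s::real. norm (v + s *\<^sub>R axis k 1) = \<rho>} \<subseteq> {sqrt d - v $ k, - sqrt d - v $ k}"
  proof
    fix s assume "s \<in> {s::real. norm (v + s *\<^sub>R axis k 1) = \<rho>}"
    then have "(norm v)^2 + 2 * s * v $ k + s^2 = \<rho>^2"
      using norm_add_scaleR_axis_sq[of v s k] by simp
    then have "(s + v $ k)^2 = d" by (simp add: d_def power2_eq_square algebra_simps)
    then have "\<bar>s + v $ k\<bar> = sqrt d" by (metis real_sqrt_abs)
    then show "s \<in> {sqrt d - v $ k, - sqrt d - v $ k}" by (auto simp: abs_if split: if_splits)
  qed
  then show ?thesis by (rule finite_subset) simp
qed

definition int_lattice :: "(real^3) set" where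
  "int_lattice = {m. \<forall>j. m $ j \<in> \<int>}"

lemma countable_int_lattice: "countable int_lattice"
proof -
  have "int_lattice \<subseteq> range (\<lambda>g :: 3 \<Rightarrow> int. \<chi> j. of_int (g j))"
  proof
    fix m assume "m \<in> int_lattice"
    then have "\<forall>j. \<exists>z::int. m $ j = of_int z" by (auto simp: int_lattice_def elim!: Ints_cases)
    then obtain g where "\<forall>j. m $ j = of_int (g j)" by metis
    then have "m = (\<chi> j. of_int (g j))" by (auto simp: vec_eq_iff)
    then show "m \<in> range (\<lambda>g :: 3 \<Rightarrow> int. \<chi> j. of_int (g j))" by blast
  qed
  then show ?thesis by (rule countable_subset) simp
qed

lemma cmod_power2_ge:
  fixes a w :: complex and t :: real
  shows "(cmod a)^2 \<ge> - t * (2 * (Re w * Re a + Im w * Im a)) - t^2 * (cmod w)^2"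
proof -
  have "0 \<le> (cmod (a + t *\<^sub>R w))^2" by simp
  also have "\<dots> = (cmod a)^2 + t * (2 * (Re w * Re a + Im w * Im a)) + t^2 * (cmod w)^2"
    unfolding cmod_power2 by (simp add: power2_eq_square algebra_simps)
  finally show ?thesis by simp
qed

text \<open>\<open>F\<close> is the trial field \<open>\<Sum>\<^sub>i G(x - y\<^sub>i)\<close> on the torus, \<open>flux k\<close> is \<open>F\<^sub>k |f|\<^sup>2\<close>, and \<open>dflux k\<close>
  its partial derivative along \<open>e\<^sub>k\<close>, valid off the null set \<open>singular_set\<close> where some
  \<open>|x - y\<^sub>i|\<close> is \<open>0\<close>, \<open>R0\<close> or \<open>R1\<close>.\<close>

locale torus_trial_field = radial_profile R0 R1 lam for R0 R1 lam +
  fixes L :: real and n :: nat and y :: "nat \<Rightarrow> real^3" and f :: "real^3 \<Rightarrow> complex"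
    and D :: "real^3 \<Rightarrow> real^3 \<Rightarrow> complex"
  assumes R1_less: "R1 < L / 2"
    and separated: "\<And>i j. i < n \<Longrightarrow> j < n \<Longrightarrow> i \<noteq> j \<Longrightarrow> torus_dist L (y i) (y j) \<ge> 2 * R1"
    and f_periodic: "periodic3 L f"
    and f_deriv: "\<And>x. (f has_derivative D x) (at x)"
    and continuous_partials: "\<And>k. continuous_on UNIV (\<lambda>x. D x (axis k 1))"
begin

lemma L_pos: "L > 0"
  using R1_less R0_pos R0_less_R1 by simp

lemma margin_pos: "L / 2 - R1 > 0"
  using R1_less by simp

definition "fsq x = (cmod (f x))^2"
definition "dfsq k x = 2 * (Re (f x) * Re (D x (axis k 1)) + Im (f x) * Im (D x (axis k 1)))"

lemma continuous_on_f: "continuous_on UNIV f"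
  using f_deriv has_derivative_continuous by (blast intro: continuous_at_imp_continuous_on)

lemma continuous_on_fsq: "continuous_on UNIV fsq"
  unfolding fsq_def[abs_def] by (intro continuous_intros continuous_on_f)

lemma continuous_on_dfsq: "continuous_on UNIV (dfsq k)"
  unfolding dfsq_def[abs_def] by (intro continuous_intros continuous_on_f continuous_partials)

lemma fsq_translate: "fsq (x + L *\<^sub>R axis k 1) = fsq x"
  using f_periodic by (simp add: fsq_def periodic3_def)

lemma fsq_nonneg: "fsq x \<ge> 0"
  by (simp add: fsq_def)

lemma fsq_partial_deriv: "((\<lambda>s. fsq (x + s *\<^sub>R axis k 1)) has_real_derivative dfsq k x) (at 0)"
proof -
  let ?e = "axis k 1 :: real^3" and ?f = "\<lambda>s. f (x + s *\<^sub>R axis k 1)"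
  have "((\<lambda>s::real. x + s *\<^sub>R ?e) has_derivative (\<lambda>h. h *\<^sub>R ?e)) (at 0)"
    by (auto intro!: derivative_eq_intros)
  from diff_chain_at[OF this, of f "D x"]
  have df: "(?f has_derivative (\<lambda>h. D x (h *\<^sub>R ?e))) (at 0)"
    using f_deriv by (simp add: o_def)
  have lin: "D x (h *\<^sub>R ?e) = h *\<^sub>R D x ?e" for h
    using f_deriv[of x]
    by (simp add: has_derivative_def linear_simps(5) bounded_linear.linear linear_cmul)
  have "((\<lambda>s. Re (?f s)) has_real_derivative Re (D x ?e)) (at 0)"
    unfolding has_field_derivative_def using has_derivative_Re[OF df] lin
    by (simp add: mult.commute[of _ "Re (D x ?e)"])
  moreover have "((\<lambda>s. Im (?f s)) has_real_derivative Im (D x ?e)) (at 0)"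
    unfolding has_field_derivative_def using has_derivative_Im[OF df] lin
    by (simp add: mult.commute[of _ "Im (D x ?e)"])
  ultimately have "((\<lambda>s. Re (?f s) * Re (?f s) + Im (?f s) * Im (?f s)) has_real_derivative
      Re (D x ?e) * Re (?f 0) + Re (D x ?e) * Re (?f 0)
      + (Im (D x ?e) * Im (?f 0) + Im (D x ?e) * Im (?f 0))) (at 0)"
    by (intro DERIV_add DERIV_mult)
  moreover have "(\<lambda>s. fsq (x + s *\<^sub>R ?e)) = (\<lambda>s. Re (?f s) * Re (?f s) + Im (?f s) * Im (?f s))"
    unfolding fsq_def cmod_power2 by (simp add: power2_eq_square)
  ultimately show ?thesis by (simp add: dfsq_def algebra_simps)
qed

lemma grad_sq_eq: "grad_sq f x = (\<Sum>k\<in>UNIV. (cmod (D x (axis k 1)))^2)"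
  using frechet_derivative_at[OF f_deriv[of x]] by (simp add: grad_sq_def)

definition "center i x0 = y i + L *\<^sub>R lattice_round L (x0 - y i)"
definition "F x = (\<Sum>i<n. G (torus_reduce L (x - y i)))"
definition "dF k x = (\<Sum>i<n. dG k (torus_reduce L (x - y i)))"
definition "flux k x = F x $ k * fsq x"
definition "dflux k x = dF k x * fsq x + F x $ k * dfsq k x"
definition "singular_set = {x. \<exists>i<n. torus_dist L x (y i) \<in> {0, R0, R1}}"

lemma torus_dist_center: "torus_dist L x0 (y i) = norm (x0 - center i x0)"
  by (simp add: torus_dist_eq_norm_reduce[OF L_pos] torus_reduce_def center_def algebra_simps)

lemma G_reduce_local:
  assumes "norm (x - x0) < L / 2 - R1"
  shows "G (torus_reduce L (x - y i)) = G (x - center i x0)"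
proof -
  have "G (torus_reduce L (x - y i)) = G ((x - y i) - L *\<^sub>R lattice_round L (x0 - y i))"
    by (rule torus_reduce_local[OF L_pos R1_less]) (use G_beyond assms in auto)
  then show ?thesis by (simp add: center_def algebra_simps)
qed

lemma dG_reduce_local:
  assumes "norm (x - x0) < L / 2 - R1"
  shows "dG k (torus_reduce L (x - y i)) = dG k (x - center i x0)"
proof -
  have "dG k (torus_reduce L (x - y i)) = dG k ((x - y i) - L *\<^sub>R lattice_round L (x0 - y i))"
    by (rule torus_reduce_local[OF L_pos R1_less]) (use dG_beyond assms in auto)
  then show ?thesis by (simp add: center_def algebra_simps)
qed

lemma isCont_G_reduce: "isCont (\<lambda>x. G (torus_reduce L (x - y i))) x0"
proof -
  have "isCont G (x0 - center i x0)" using continuous_on_G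
    by (simp add: continuous_on_eq_continuous_at)
  then have "isCont (\<lambda>x. G (x - center i x0)) x0"
    using continuous_at_compose[of x0 "\<lambda>x. x - center i x0" G] by (simp add: o_def)
  then show ?thesis
    by (rule continuous_transform_within[OF _ margin_pos]) (auto simp: dist_norm G_reduce_local)
qed

lemma continuous_on_flux: "continuous_on UNIV (flux k)"
proof -
  have "continuous_on UNIV F"
    unfolding F_def[abs_def]
    by (intro continuous_at_imp_continuous_on ballI continuous_intros isCont_G_reduce)
  then show ?thesis unfolding flux_def[abs_def] by (intro continuous_intros continuous_on_fsq)
qed

lemma flux_translate: "flux k (x + L *\<^sub>R axis k' 1) = flux k x"
proof -
  have "torus_reduce L (x + L *\<^sub>R axis k' 1 - y i) = torus_reduce L (x - y i)" for i
    using torus_reduce_periodic[OF L_pos, of "x - y i" k'] by (simp add: algebra_simps)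
  then show ?thesis by (simp add: flux_def F_def fsq_translate)
qed

text \<open>Within distance \<open>L/2 - R1\<close> of \<open>x0\<close>, \<open>F\<close> is a finite sum of translates of \<open>G\<close>, so the
  derivative can be computed term by term.\<close>

lemma flux_partial_deriv_local:
  assumes s0: "\<bar>s0\<bar> < L / 2 - R1"
    and regular: "\<And>i. i < n \<Longrightarrow> norm (x0 + s0 *\<^sub>R axis k 1 - center i x0) \<notin> {0, R0, R1}"
  shows "((\<lambda>s. flux k (x0 + s *\<^sub>R axis k 1)) has_real_derivative dflux k (x0 + s0 *\<^sub>R axis k 1))
    (at s0)"
proof -
  let ?e = "axis k 1 :: real^3"
  let ?x = "\<lambda>s. x0 + s *\<^sub>R ?e"
  have near: "\<bar>s\<bar> < L / 2 - R1 \<Longrightarrow> norm (?x s - x0) < L / 2 - R1" for s by simp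
  have dG:
    "((\<lambda>s. G (?x s - center i x0) $ k) has_real_derivative dG k (?x s0 - center i x0)) (at s0)"
    if i: "i < n" for i
  proof -
    let ?w = "?x s0 - center i x0"
    have "((\<lambda>s. G (?w + s *\<^sub>R ?e) $ k) has_real_derivative dG k ?w) (at 0)"
      using regular[OF i] by (intro G_partial_deriv) auto
    then have "((\<lambda>s. G (?x (s + s0) - center i x0) $ k) has_real_derivative dG k ?w) (at 0)"
      by (simp add: algebra_simps scaleR_add_left)
    then show ?thesis using DERIV_shift[of "\<lambda>s. G (?x s - center i x0) $ k" "dG k ?w" 0 s0] by simp
  qed
  have dfsq: "((\<lambda>s. fsq (?x s)) has_real_derivative dfsq k (?x s0)) (at s0)"
  proof -
    have "((\<lambda>s. fsq (?x s0 + s *\<^sub>R ?e)) has_real_derivative dfsq k (?x s0)) (at 0)"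
      by (rule fsq_partial_deriv)
    then have "((\<lambda>s. fsq (?x (s + s0))) has_real_derivative dfsq k (?x s0)) (at 0)"
      by (simp add: algebra_simps scaleR_add_left)
    then show ?thesis using DERIV_shift[of "\<lambda>s. fsq (?x s)" _ 0 s0] by simp
  qed
  have deriv: "((\<lambda>s. (\<Sum>i<n. G (?x s - center i x0)) $ k * fsq (?x s)) has_real_derivative
     (\<Sum>i<n. dG k (?x s0 - center i x0)) * fsq (?x s0)
     + dfsq k (?x s0) * (\<Sum>i<n. G (?x s0 - center i x0)) $ k) (at s0)"
    unfolding sum_component by (intro DERIV_mult DERIV_sum dG dfsq) auto
  have eq: "dflux k (?x s0) = (\<Sum>i<n. dG k (?x s0 - center i x0)) * fsq (?x s0) +
     dfsq k (?x s0) * (\<Sum>i<n. G (?x s0 - center i x0)) $ k"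
    using G_reduce_local[OF near[OF s0]] dG_reduce_local[OF near[OF s0]]
    by (simp add: dflux_def dF_def F_def mult.commute)
  show ?thesis unfolding eq
    by (rule has_field_derivative_transform_within_open[OF deriv,
          where S="{-(L/2 - R1)<..<L/2 - R1}"])
       (use s0 in \<open>auto simp: flux_def F_def G_reduce_local[OF near]\<close>)
qed

lemma flux_partial_deriv:
  assumes "x \<notin> singular_set"
  shows "((\<lambda>s. flux k (x + s *\<^sub>R axis k 1)) has_real_derivative dflux k x) (at 0)"
  using flux_partial_deriv_local[of 0 x k] assms margin_pos
  by (auto simp: singular_set_def torus_dist_center)

lemma negligible_singular_set: "negligible singular_set"
proof -
  define spheres where "spheres =
    (\<lambda>(i, \<rho>, m). sphere (y i + L *\<^sub>R m) \<rho>) ` ({..<n} \<times> {0, R0, R1} \<times> int_lattice)"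
  have "negligible (\<Union>spheres)"
    by (rule negligible_countable_Union)
       (use countable_int_lattice in \<open>auto simp: spheres_def negligible_sphere\<close>)
  moreover have "singular_set \<subseteq> \<Union>spheres"
  proof
    fix x assume "x \<in> singular_set"
    then obtain i \<rho> where i: "i < n" "\<rho> \<in> {0, R0, R1}" "torus_dist L x (y i) = \<rho>"
      by (auto simp: singular_set_def)
    let ?m = "lattice_round L (x - y i)"
    have "?m \<in> int_lattice" using lattice_round_Ints by (simp add: int_lattice_def)
    moreover have "x \<in> sphere (y i + L *\<^sub>R ?m) \<rho>"
      using i(3) torus_dist_eq_norm_reduce[OF L_pos]
      by (simp add: torus_reduce_def dist_norm norm_minus_commute algebra_simps)
    ultimately show "x \<in> \<Union>spheres" using i unfolding spheres_def by blast
  qed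
  ultimately show ?thesis by (rule negligible_subset)
qed

section \<open>Integration by parts\<close>

definition "cube_nbhd = (cbox (\<chi> i. -1) (\<chi> i. L + 1) :: (real^3) set)"

lemma cube_shift_in_nbhd: "x \<in> fund_cube L \<Longrightarrow> 0 \<le> s \<Longrightarrow> s \<le> 1 \<Longrightarrow> x + s *\<^sub>R axis k 1 \<in> cube_nbhd"
  by (auto simp: fund_cube_def cube_nbhd_def mem_box_cart axis_def) (smt (verit))+

lemma dflux_bounded: "\<exists>C. \<forall>x\<in>cube_nbhd. \<bar>dflux k x\<bar> \<le> C"
proof -
  have bounded_cont: "\<exists>B. \<forall>x\<in>cube_nbhd. \<bar>h x\<bar> \<le> B"
    if "continuous_on UNIV h" for h :: "real^3 \<Rightarrow> real"
  proof -
    have "bounded (h ` cube_nbhd)" unfolding cube_nbhd_def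
      by (intro compact_imp_bounded compact_continuous_image continuous_on_subset[OF that]) auto
    then show ?thesis by (auto simp: bounded_iff)
  qed
  obtain B1 where B1: "\<And>x. x \<in> cube_nbhd \<Longrightarrow> \<bar>fsq x\<bar> \<le> B1"
    using bounded_cont[OF continuous_on_fsq] by blast
  obtain B2 where B2: "\<And>x. x \<in> cube_nbhd \<Longrightarrow> \<bar>dfsq k x\<bar> \<le> B2"
    using bounded_cont[OF continuous_on_dfsq] by blast
  have dF: "\<bar>dF k x\<bar> \<le> real n * (q_max + dq_max)" for x
  proof -
    have "\<bar>dF k x\<bar> \<le> (\<Sum>i<n. \<bar>dG k (torus_reduce L (x - y i))\<bar>)" unfolding dF_def by (rule sum_abs)
    also have "\<dots> \<le> real (card {..<n}) * (q_max + dq_max)"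
      by (rule sum_bounded_above) (rule abs_dG_le)
    finally show ?thesis by simp
  qed
  have F: "\<bar>F x $ k\<bar> \<le> real n * (q_max * R1)" for x
  proof -
    have "\<bar>F x $ k\<bar> \<le> (\<Sum>i<n. norm (G (torus_reduce L (x - y i))))"
      unfolding F_def using component_le_norm_cart norm_sum order_trans by blast
    also have "\<dots> \<le> real (card {..<n}) * (q_max * R1)" by (rule sum_bounded_above) (rule norm_G_le)
    finally show ?thesis by simp
  qed
  have nonneg: "0 \<le> q_max + dq_max" "0 \<le> q_max * R1"
    using order_trans[OF abs_ge_zero abs_dG_le] order_trans[OF norm_ge_zero norm_G_le] by blast+
  have "\<bar>dflux k x\<bar> \<le> real n * (q_max + dq_max) * B1 + real n * (q_max * R1) * B2"
    if x: "x \<in> cube_nbhd" for x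
  proof -
    have "\<bar>dflux k x\<bar> \<le> \<bar>dF k x\<bar> * \<bar>fsq x\<bar> + \<bar>F x $ k\<bar> * \<bar>dfsq k x\<bar>"
      unfolding dflux_def by (metis abs_mult abs_triangle_ineq)
    also have "\<dots> \<le> real n * (q_max + dq_max) * B1 + real n * (q_max * R1) * B2"
      using dF F B1[OF x] B2[OF x] nonneg by (intro add_mono mult_mono) auto
    finally show ?thesis .
  qed
  then show ?thesis by blast
qed

text \<open>Along a line, \<open>flux k\<close> is differentiable except where the line meets one of finitely
  many spheres, so the strong fundamental theorem of calculus turns the bound on \<open>dflux k\<close>
  into a Lipschitz bound.\<close>

lemma flux_lipschitz:
  assumes C: "\<forall>x\<in>cube_nbhd. \<bar>dflux k x\<bar> \<le> C"
    and x: "x \<in> fund_cube L" and t: "0 < t" "t < min (L / 2 - R1) 1"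
  shows "\<bar>flux k (x + t *\<^sub>R axis k 1) - flux k x\<bar> \<le> C * t"
proof -
  let ?e = "axis k 1 :: real^3"
  define E where "E = (\<Union>i<n. \<Union>\<rho>\<in>{0, R0, R1}. {s. norm ((x - center i x) + s *\<^sub>R ?e) = \<rho>})"
  have "finite E" unfolding E_def by (intro finite_UN_I finite_line_sphere_inter) auto
  then have ftc: "((\<lambda>s. dflux k (x + s *\<^sub>R ?e)) has_integral
      (flux k (x + t *\<^sub>R ?e) - flux k (x + 0 *\<^sub>R ?e))) {0..t}"
  proof (rule fundamental_theorem_of_calculus_interior_strong)
    fix s assume s: "s \<in> {0<..<t} - E"
    have "norm (x + s *\<^sub>R ?e - center i x) \<notin> {0, R0, R1}" if "i < n" for i
      using s that unfolding E_def by (auto simp: algebra_simps)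
    moreover have "\<bar>s\<bar> < L / 2 - R1" using s t by auto
    ultimately show
      "((\<lambda>s. flux k (x + s *\<^sub>R ?e)) has_vector_derivative dflux k (x + s *\<^sub>R ?e)) (at s)"
      using flux_partial_deriv_local[of s x k]
      by (simp add: has_real_derivative_iff_has_vector_derivative)
  next
    show "continuous_on {0..t} (\<lambda>s. flux k (x + s *\<^sub>R ?e))"
      by (intro continuous_on_compose2[OF continuous_on_flux] continuous_intros) auto
  qed (use t in simp)
  have bound: "norm (dflux k (x + s *\<^sub>R ?e)) \<le> C" if "s \<in> {0..t} - {}" for s
    using C cube_shift_in_nbhd[OF x, of s k] that t by auto
  have "x \<in> cube_nbhd" using cube_shift_in_nbhd[OF x, of 0 k] by simp
  then have "0 \<le> C" using C abs_ge_zero order_trans by blast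
  from has_integral_bound_real[OF this finite.emptyI ftc bound] show ?thesis using t by simp
qed

lemma dflux_integral:
  shows integrable_dflux: "dflux k integrable_on fund_cube L"
    and integral_dflux: "integral (fund_cube L) (dflux k) = 0"
proof -
  obtain C where C: "\<forall>x\<in>cube_nbhd. \<bar>dflux k x\<bar> \<le> C" using dflux_bounded by blast
  have bound: "\<bar>dflux k x\<bar> \<le> C" if "x \<in> fund_cube L" for x
    using C cube_shift_in_nbhd[OF that, of 0 k] by simp
  have step: "min (L / 2 - R1) 1 > 0" using margin_pos by simp
  note zero_integral = periodic_derivative_integral_eq_0[OF L_pos continuous_on_flux flux_translate
      negligible_singular_set flux_partial_deriv step flux_lipschitz[OF C] bound]
  show "dflux k integrable_on fund_cube L" "integral (fund_cube L) (dflux k) = 0"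
    using zero_integral by simp_all
qed

section \<open>The pointwise inequality and its integration\<close>

lemma torus_dist_far:
  assumes "i < n" "j < n" "i \<noteq> j" "torus_dist L x (y i) < R1"
  shows "torus_dist L x (y j) > R1"
  using torus_dist_triangle[OF L_pos, where x=x and y="y j" and z="y i"]
    separated[OF assms(2,1)] assms(3,4)
  by auto

lemma norm_torus_reduce_eq: "norm (torus_reduce L (x - y j)) = torus_dist L x (y j)"
  by (simp add: torus_dist_eq_norm_reduce[OF L_pos])

text \<open>By the separation, at most one centre is within \<open>R1\<close> of \<open>x\<close>, so at \<open>x\<close> the field and
  both Heaviside sums reduce to the single-centre terms of \<open>divergence_ineq\<close>.\<close>

lemma divergence_ineq_F:
  assumes x: "x \<notin> singular_set"
  shows "(\<Sum>k\<in>UNIV. dF k x) - (norm (F x))^2 \<ge>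
    wavenum^2 * (\<Sum>i<n. heaviside (R0 - torus_dist L x (y i)))
    - shell_const * (\<Sum>i<n. heaviside (R1 - torus_dist L x (y i)))"
proof (cases "\<exists>i0<n. torus_dist L x (y i0) < R1")
  case True
  then obtain i0 where i0: "i0 < n" "torus_dist L x (y i0) < R1" by blast
  let ?w = "torus_reduce L (x - y i0)"
  have far: "torus_dist L x (y j) > R1" if "j < n" "j \<noteq> i0" for j
    using torus_dist_far[OF i0(1) that(1) _ i0(2)] that(2) by auto
  have single: "(\<Sum>i<n. h i) = h i0" if "\<And>j. j < n \<Longrightarrow> j \<noteq> i0 \<Longrightarrow> h j = 0"
    for h :: "nat \<Rightarrow> 'a::comm_monoid_add"
    using sum.mono_neutral_right[of "{..<n}" "{i0}" h] that i0(1) by simp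
  have "F x = G ?w" unfolding F_def
    by (rule single) (use far G_beyond norm_torus_reduce_eq less_imp_le in metis)
  moreover have "dF k x = dG k ?w" for k unfolding dF_def
    by (rule single) (use far dG_beyond norm_torus_reduce_eq less_imp_le in metis)
  moreover have "(\<Sum>i<n. heaviside (\<rho> - torus_dist L x (y i))) = heaviside (\<rho> - norm ?w)"
    if "\<rho> \<le> R1" for \<rho>
    by (rule single[THEN trans])
       (use that in \<open>auto simp: heaviside_def norm_torus_reduce_eq dest!: far\<close>)
  moreover have "norm ?w \<noteq> 0" "norm ?w \<noteq> R0" "norm ?w \<noteq> R1"
    using x i0 by (auto simp: singular_set_def norm_torus_reduce_eq)
  ultimately show ?thesis using divergence_ineq[of ?w] R0_less_R1 by simp
next
  case False
  then have far: "R1 \<le> norm (torus_reduce L (x - y j))" if "j < n" for j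
    using that by (metis norm_torus_reduce_eq not_less)
  then have "F x = 0" "dF k x = 0" for k
    by (simp_all add: F_def dF_def G_beyond dG_beyond)
  moreover have "heaviside (\<rho> - torus_dist L x (y j)) = 0" if "\<rho> \<le> R1" "j < n" for \<rho> j
    using False that x by (force simp: heaviside_def singular_set_def)
  ultimately show ?thesis using R0_less_R1 by simp
qed

lemma pointwise_lower_bound:
  assumes x: "x \<notin> singular_set"
  shows "grad_sq f x - wavenum^2 * (\<Sum>i<n. heaviside (R0 - torus_dist L x (y i))) * fsq x \<ge>
     - (\<Sum>k\<in>UNIV. dflux k x) - shell_const * (\<Sum>i<n. heaviside (R1 - torus_dist L x (y i))) * fsq x"
proof -
  have "grad_sq f x \<ge> (\<Sum>k\<in>UNIV. - (F x $ k) * dfsq k x - (F x $ k)^2 * fsq x)"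
    unfolding grad_sq_eq by (rule sum_mono) (use cmod_power2_ge in \<open>simp add: dfsq_def fsq_def\<close>)
  then have "grad_sq f x \<ge> - (\<Sum>k\<in>UNIV. F x $ k * dfsq k x) - (\<Sum>k\<in>UNIV. (F x $ k)^2) * fsq x"
    by (simp add: sum_subtractf sum_negf sum_distrib_right)
  then have "grad_sq f x \<ge> - (\<Sum>k\<in>UNIV. F x $ k * dfsq k x) - (norm (F x))^2 * fsq x"
    by (simp only: sum_power2_components)
  moreover have "(\<Sum>k\<in>UNIV. dflux k x) = (\<Sum>k\<in>UNIV. dF k x) * fsq x + (\<Sum>k\<in>UNIV. F x $ k * dfsq k x)"
    by (simp add: dflux_def sum.distrib sum_distrib_right)
  moreover have "((\<Sum>k\<in>UNIV. dF k x) - (norm (F x))^2) * fsq x \<ge>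
      (wavenum^2 * (\<Sum>i<n. heaviside (R0 - torus_dist L x (y i)))
       - shell_const * (\<Sum>i<n. heaviside (R1 - torus_dist L x (y i)))) * fsq x"
    by (rule mult_right_mono[OF divergence_ineq_F[OF x] fsq_nonneg])
  ultimately show ?thesis by (simp add: algebra_simps)
qed

lemma integrable_heaviside_fsq:
  "(\<lambda>x. heaviside (\<rho> - torus_dist L x (y i)) * fsq x) integrable_on fund_cube L"
proof -
  let ?S = "fund_cube L" and ?H = "\<lambda>x. heaviside (\<rho> - torus_dist L x (y i))"
  have S: "?S \<in> sets lebesgue" by (simp add: fund_cube_def)
  have "(\<lambda>x. torus_dist L x (y i)) \<in> borel_measurable (lebesgue_on ?S)"
    by (rule continuous_imp_measurable_on_sets_lebesgue[OF
        continuous_on_subset[OF continuous_on_torus_dist[OF L_pos] subset_UNIV] S])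
  then have level_set:
    "{x \<in> space (lebesgue_on ?S). torus_dist L x (y i) \<le> \<rho>} \<in> sets (lebesgue_on ?S)"
    by (rule borel_measurable_le[OF _ borel_measurable_const])
  have "?H = (\<lambda>x. if torus_dist L x (y i) \<le> \<rho> then 1 else 0)"
    by (auto simp: heaviside_def fun_eq_iff)
  then have measurable: "?H \<in> borel_measurable (lebesgue_on ?S)"
    by (simp only:) (rule measurable_If[OF measurable_const measurable_const level_set]; simp)
  have bounded: "bounded (?H ` ?S)"
    by (rule boundedI[of _ 1]) (auto simp: heaviside_def)
  have "fsq absolutely_integrable_on ?S" unfolding fund_cube_def
    by (rule absolutely_integrable_continuous[OF continuous_on_subset[OF continuous_on_fsq]]) auto
  from absolutely_integrable_bounded_measurable_product[OF bilinear_times measurable S bounded this]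
  show ?thesis by (simp add: absolutely_integrable_on_def)
qed

lemma integrable_heaviside_sum_fsq:
  "(\<lambda>x. (\<Sum>i<n. heaviside (\<rho> - torus_dist L x (y i))) * fsq x) integrable_on fund_cube L"
  unfolding sum_distrib_right by (intro integrable_sum integrable_heaviside_fsq) simp

lemma integrable_grad_sq: "grad_sq f integrable_on fund_cube L"
proof -
  have "continuous_on UNIV (\<lambda>x. \<Sum>k\<in>UNIV. (cmod (D x (axis k 1)))^2)"
    by (intro continuous_on_sum continuous_on_power continuous_on_norm continuous_partials)
  then have "(\<lambda>x. \<Sum>k\<in>UNIV. (cmod (D x (axis k 1)))^2) integrable_on fund_cube L"
    unfolding fund_cube_def by (rule integrable_continuous[OF continuous_on_subset]) simp
  then show ?thesis by (simp add: grad_sq_eq[abs_def])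
qed

lemma main_inequality:
  "integral (fund_cube L) (\<lambda>x. grad_sq f x
      - (lam\<^sup>2 / R0\<^sup>2) * (\<Sum>i<n. heaviside (R0 - torus_dist L x (y i))) * (cmod (f x))\<^sup>2)
   \<ge> - (3 * R0 / (R1 ^ 3 - R0 ^ 3)) * tan_factor lam
      * integral (fund_cube L) (\<lambda>x. (\<Sum>i<n. heaviside (R1 - torus_dist L x (y i))) * (cmod (f x))\<^sup>2)"
proof -
  let ?S = "fund_cube L"
  define T0 where "T0 x = (\<Sum>i<n. heaviside (R0 - torus_dist L x (y i))) * fsq x" for x
  define T1 where "T1 x = (\<Sum>i<n. heaviside (R1 - torus_dist L x (y i))) * fsq x" for x
  define l where "l x = grad_sq f x - wavenum^2 * T0 x" for x
  define r where "r x = - (\<Sum>k\<in>UNIV. dflux k x) - shell_const * T1 x" for x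
  define r' where "r' x = (if x \<in> singular_set then l x else r x)" for x
  have T0: "T0 integrable_on ?S" and T1: "T1 integrable_on ?S"
    unfolding T0_def[abs_def] T1_def[abs_def] by (rule integrable_heaviside_sum_fsq)+
  have div: "(\<lambda>x. \<Sum>k\<in>UNIV. dflux k x) integrable_on ?S" "integral ?S (\<lambda>x. \<Sum>k\<in>UNIV. dflux k x) = 0"
    by (simp_all add: integrable_sum integrable_dflux integral_sum integral_dflux)
  have r: "r integrable_on ?S"
    unfolding r_def[abs_def]
    by (intro integrable_diff integrable_neg integrable_on_mult_right div(1) T1)
  have "- shell_const * integral ?S T1 = integral ?S r"
    unfolding r_def[abs_def] using div T1
    by (simp add: integral_diff integrable_neg integrable_on_mult_right integral_neg)
  also have "\<dots> = integral ?S r'"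
    by (rule integral_spike[OF negligible_singular_set]) (simp add: r'_def)
  also have "\<dots> \<le> integral ?S l"
  proof (rule integral_le)
    show "r' integrable_on ?S"
      by (rule integrable_spike[OF r negligible_singular_set]) (simp add: r'_def)
    show "l integrable_on ?S"
      unfolding l_def[abs_def]
      by (intro integrable_diff integrable_grad_sq integrable_on_mult_right T0)
    show "r' x \<le> l x" for x
      using pointwise_lower_bound[of x] by (simp add: r'_def r_def l_def T0_def T1_def mult.assoc)
  qed
  finally have "- shell_const * integral ?S T1 \<le> integral ?S l" .
  moreover have "l = (\<lambda>x. grad_sq f x
      - (lam\<^sup>2 / R0\<^sup>2) * (\<Sum>i<n. heaviside (R0 - torus_dist L x (y i))) * (cmod (f x))\<^sup>2)"
    by (simp add: fun_eq_iff l_def T0_def fsq_def wavenum_def power_divide)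
  moreover have "T1 = (\<lambda>x. (\<Sum>i<n. heaviside (R1 - torus_dist L x (y i))) * (cmod (f x))\<^sup>2)"
    by (simp add: fun_eq_iff T1_def fsq_def)
  moreover have "shell_const = 3 * R0 / (R1 ^ 3 - R0 ^ 3) * tan_factor lam"
    using lam_pos by (simp add: shell_const_def cube_gap_def tan_factor_def)
  ultimately show ?thesis by simp
qed

end

lemma integral_grad_sq_nonneg: "0 \<le> integral S (grad_sq f)"
  by (cases "grad_sq f integrable_on S")
     (auto intro!: integral_nonneg sum_nonneg simp: grad_sq_def not_integrable_integral)

theorem lemma3:
  fixes L R\<^sub>0 R lam :: real and n :: nat and y :: "nat \<Rightarrow> real^3"
    and f :: "real^3 \<Rightarrow> complex"
  assumes "R\<^sub>0 > 0" and "R > 0" and "R\<^sub>0 < R / 10" and "R / 10 < L / 2"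
    and "\<And>i j. i < n \<Longrightarrow> j < n \<Longrightarrow> i \<noteq> j \<Longrightarrow> torus_dist L (y i) (y j) \<ge> R / 5"
    and "0 \<le> lam" and "lam < pi / 2"
    and "periodic3 L f" and "C1_fun f"
  shows "integral (fund_cube L) (\<lambda>x. grad_sq f x
            - (lam\<^sup>2 / R\<^sub>0\<^sup>2) * (\<Sum>i<n. heaviside (R\<^sub>0 - torus_dist L x (y i))) * (cmod (f x))\<^sup>2)
         \<ge> - (3 * R\<^sub>0 / ((R / 10) ^ 3 - R\<^sub>0 ^ 3)) * tan_factor lam
            * integral (fund_cube L) (\<lambda>x. (\<Sum>i<n. heaviside (R / 10 - torus_dist L x (y i))) * (cmod (f x))\<^sup>2)"
proof (cases "lam = 0")
  case True
  then show ?thesis using integral_grad_sq_nonneg[of "fund_cube L" f] by (simp add: tan_factor_def)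
next
  case False
  obtain D where "\<And>x. (f has_derivative D x) (at x)" "\<And>k. continuous_on UNIV (\<lambda>x. D x (axis k 1))"
    using \<open>C1_fun f\<close> unfolding C1_fun_def by blast
  moreover have "torus_dist L (y i) (y j) \<ge> 2 * (R / 10)" if "i < n" "j < n" "i \<noteq> j" for i j
    using assms(5)[OF that] by simp
  moreover have "0 < lam" using False \<open>0 \<le> lam\<close> by simp
  ultimately interpret torus_trial_field R\<^sub>0 "R / 10" lam L n y f D
    using assms(1,3,4,7,8) by unfold_locales
  show ?thesis by (rule main_inequality)
qed

end
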